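(* Let $G$, $\mathcal{D}_G$, $\mathcal{A}_k$ and $\mathcal{Q}(\vec q)$ be as in the context. For every $\vec q\in\mathbb{Z}^c$, the set $\mathcal{Q}(\vec q)$ is either empty or consists of a single point.
   Context: Let $G$ be a finite connected planar graph with $n$ vertices and $m$ edges, such that every edge of $G$ lies on at least one cycle of $G$, and fix a planar embedding of $G$. Let $F_1,\dots,F_c$ ($c=m-n+1$) be the bounded faces of the embedding; each edge borders exactly two faces (possibly one of them the unbounded one). For $k\neq \ell$ let $m_{k\ell}$ be the number of edges bordering both $F_k$ and $F_\ell$, and let $m_k$ be the number of edges bordering $F_k$ and the unbounded face. Define $\mathcal{D}_G=\{\vec\varepsilon\in\mathbb{R}^c: |\varepsilon_k|\le 1 \text{ whenever } m_k>0,\ |\varepsilon_k-\varepsilon_\ell|\le 1\text{ whenever } m_{k\ell}>0\}$, and for $k=1,\dots,c$ the function $\mathcal{A}_k:\mathcal{D}_G\to\mathbb{R}$, $\mathcal{A}_k(\vec\varepsilon)=m_k\arcsin(\varepsilon_k)+\sum_{\ell\neq k}m_{k\ell}\arcsin(\varepsilon_k-\varepsilon_\ell)$ (the sum of the angle differences around the counterclockwise boundary of $F_k$ induced by loop flows $\varepsilon_1,\dots,\varepsilon_c$ on the faces). For $\vec q=(q_1,\dots,q_c)\in\mathbb{Z}^c$ let $\mathcal{Q}(\vec q)=\{\vec\varepsilon\in\mathcal{D}_G:\mathcal{A}_k(\vec\varepsilon)=2\pi q_k\text{ for all }k\}$. *)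

theory Defs
  imports "HOL-Analysis.Analysis" "HOL-Library.FuncSet"
begin

text \<open>A finite connected plane graph is encoded as a combinatorial map (rotation system):
a finite set D of darts (half-edges), a fixed-point-free involution alpha on D
(the two darts of an edge) and a permutation sigma of D (the counterclockwise
rotation of darts around each vertex).  The embedding is planar iff
Euler's formula V - E + F = 2 holds (genus 0).\<close>

definition orb :: "('a \<Rightarrow> 'a) \<Rightarrow> 'a \<Rightarrow> 'a set" where
  "orb f x = {(f ^^ n) x | n. True}"

definition map_vertices :: "'d set \<Rightarrow> ('d \<Rightarrow> 'd) \<Rightarrow> 'd set set" where
  "map_vertices D \<sigma> = orb \<sigma> ` D"

definition map_edges :: "'d set \<Rightarrow> ('d \<Rightarrow> 'd) \<Rightarrow> 'd set set" where
  "map_edges D \<alpha> = (\<lambda>d. {d, \<alpha> d}) ` D"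

definition map_faces :: "'d set \<Rightarrow> ('d \<Rightarrow> 'd) \<Rightarrow> ('d \<Rightarrow> 'd) \<Rightarrow> 'd set set" where
  "map_faces D \<alpha> \<sigma> = orb (\<sigma> \<circ> \<alpha>) ` D"

definition adj_excl :: "'d set \<Rightarrow> ('d \<Rightarrow> 'd) \<Rightarrow> ('d \<Rightarrow> 'd) \<Rightarrow> 'd set \<Rightarrow> ('d set \<times> 'd set) set" where
  "adj_excl D \<alpha> \<sigma> X = {(orb \<sigma> x, orb \<sigma> (\<alpha> x)) | x. x \<in> D \<and> x \<notin> X}"

definition plane_map :: "'d set \<Rightarrow> ('d \<Rightarrow> 'd) \<Rightarrow> ('d \<Rightarrow> 'd) \<Rightarrow> bool" where
  "plane_map D \<alpha> \<sigma> \<longleftrightarrow>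
     finite D \<and> D \<noteq> {} \<and>
     (\<forall>d\<in>D. \<alpha> d \<in> D \<and> \<alpha> (\<alpha> d) = d \<and> \<alpha> d \<noteq> d) \<and>
     bij_betw \<sigma> D D \<and>
     \<comment> \<open>connected\<close>
     (\<forall>v\<in>map_vertices D \<sigma>. \<forall>w\<in>map_vertices D \<sigma>. (v, w) \<in> (adj_excl D \<alpha> \<sigma> {})\<^sup>*) \<and>
     \<comment> \<open>planar (genus 0)\<close>
     int (card (map_vertices D \<sigma>)) - int (card (map_edges D \<alpha>)) + int (card (map_faces D \<alpha> \<sigma>)) = 2"

text \<open>Every edge lies on a cycle: its endpoints are joined by a path avoiding the edge
(a loop is itself a cycle).\<close>
definition every_edge_on_cycle :: "'d set \<Rightarrow> ('d \<Rightarrow> 'd) \<Rightarrow> ('d \<Rightarrow> 'd) \<Rightarrow> bool" where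
  "every_edge_on_cycle D \<alpha> \<sigma> \<longleftrightarrow>
     (\<forall>d\<in>D. (orb \<sigma> d, orb \<sigma> (\<alpha> d)) \<in> (adj_excl D \<alpha> \<sigma> {d, \<alpha> d})\<^sup>*)"

definition m_between :: "'d set \<Rightarrow> ('d \<Rightarrow> 'd) \<Rightarrow> 'd set \<Rightarrow> 'd set \<Rightarrow> nat" where
  "m_between D \<alpha> K L = card {e \<in> map_edges D \<alpha>. \<exists>d\<in>e. d \<in> K \<and> \<alpha> d \<in> L}"

definition bounded_faces :: "'d set \<Rightarrow> ('d \<Rightarrow> 'd) \<Rightarrow> ('d \<Rightarrow> 'd) \<Rightarrow> 'd set \<Rightarrow> 'd set set" where
  "bounded_faces D \<alpha> \<sigma> F0 = map_faces D \<alpha> \<sigma> - {F0}"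

text \<open>The domain D_G: vectors indexed by the bounded faces (F0 = unbounded face).\<close>
definition flow_domain :: "'d set \<Rightarrow> ('d \<Rightarrow> 'd) \<Rightarrow> ('d \<Rightarrow> 'd) \<Rightarrow> 'd set \<Rightarrow> ('d set \<Rightarrow> real) set" where
  "flow_domain D \<alpha> \<sigma> F0 =
     {\<epsilon> \<in> extensional (bounded_faces D \<alpha> \<sigma> F0).
        (\<forall>K\<in>bounded_faces D \<alpha> \<sigma> F0. m_between D \<alpha> K F0 > 0 \<longrightarrow> \<bar>\<epsilon> K\<bar> \<le> 1) \<and>
        (\<forall>K\<in>bounded_faces D \<alpha> \<sigma> F0. \<forall>L\<in>bounded_faces D \<alpha> \<sigma> F0.
            K \<noteq> L \<longrightarrow> m_between D \<alpha> K L > 0 \<longrightarrow> \<bar>\<epsilon> K - \<epsilon> L\<bar> \<le> 1)}"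

definition angle_sum :: "'d set \<Rightarrow> ('d \<Rightarrow> 'd) \<Rightarrow> ('d \<Rightarrow> 'd) \<Rightarrow> 'd set \<Rightarrow> 'd set \<Rightarrow> ('d set \<Rightarrow> real) \<Rightarrow> real" where
  "angle_sum D \<alpha> \<sigma> F0 K \<epsilon> =
     real (m_between D \<alpha> K F0) * arcsin (\<epsilon> K) +
     (\<Sum>L\<in>bounded_faces D \<alpha> \<sigma> F0 - {K}. real (m_between D \<alpha> K L) * arcsin (\<epsilon> K - \<epsilon> L))"

definition Q_set :: "'d set \<Rightarrow> ('d \<Rightarrow> 'd) \<Rightarrow> ('d \<Rightarrow> 'd) \<Rightarrow> 'd set \<Rightarrow> ('d set \<Rightarrow> int) \<Rightarrow> ('d set \<Rightarrow> real) set" where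
  "Q_set D \<alpha> \<sigma> F0 q =
     {\<epsilon> \<in> flow_domain D \<alpha> \<sigma> F0.
        \<forall>K\<in>bounded_faces D \<alpha> \<sigma> F0. angle_sum D \<alpha> \<sigma> F0 K \<epsilon> = 2 * pi * real_of_int (q K)}"

end

theory Submission
  imports Defs
begin

text \<open>Let \<open>\<epsilon>\<close> and \<open>\<epsilon>'\<close> both solve the angle equations for \<open>q\<close>, and suppose \<open>\<epsilon> - \<epsilon>'\<close> attains a
positive maximum on a set \<open>S\<close> of bounded faces. Subtract the equations and sum them over \<open>S\<close>:
the contributions of edges between two faces of \<open>S\<close> cancel because arcsin is odd, and every
edge leaving \<open>S\<close> contributes a nonnegative amount because arcsin is increasing and \<open>\<epsilon> - \<epsilon>'\<close>
drops when leaving \<open>S\<close>. As the total is zero, all these contributions vanish. But the dual graph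
is connected, so some edge joins \<open>S\<close> to a face outside \<open>S\<close> (possibly the unbounded one), and
there arcsin is strictly increasing: a contradiction. Hence \<open>\<epsilon> \<le> \<epsilon>'\<close>, and by symmetry \<open>\<epsilon> = \<epsilon>'\<close>.\<close>

lemma orb_self: "x \<in> orb f x"
  unfolding orb_def by (auto intro: exI[of _ 0])

lemma orb_closed: "y \<in> orb f x \<Longrightarrow> f y \<in> orb f x"
  unfolding orb_def by (auto intro: exI[of _ "Suc _"])

lemma orb_subset:
  assumes "\<And>z. z \<in> X \<Longrightarrow> f z \<in> X" and "x \<in> X"
  shows "orb f x \<subseteq> X"
proof
  fix y assume "y \<in> orb f x"
  then obtain n where "y = (f ^^ n) x" unfolding orb_def by auto
  moreover have "(f ^^ n) x \<in> X" using assms by (induction n) auto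
  ultimately show "y \<in> X" by simp
qed

lemma m_between_pos:
  assumes "finite D" "d \<in> D" "d \<in> K" "\<alpha> d \<in> L"
  shows "m_between D \<alpha> K L > 0"
proof -
  have "{d, \<alpha> d} \<in> {e \<in> map_edges D \<alpha>. \<exists>d\<in>e. d \<in> K \<and> \<alpha> d \<in> L}"
    using assms unfolding map_edges_def by auto
  moreover have "finite (map_edges D \<alpha>)" using assms(1) unfolding map_edges_def by simp
  ultimately show ?thesis unfolding m_between_def by (auto simp: card_gt_0_iff)
qed

lemma m_between_sym:
  assumes "\<forall>d\<in>D. \<alpha> d \<in> D \<and> \<alpha> (\<alpha> d) = d"
  shows "m_between D \<alpha> K L = m_between D \<alpha> L K"
proof -
  have flip: "{e \<in> map_edges D \<alpha>. \<exists>d\<in>e. d \<in> A \<and> \<alpha> d \<in> C}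
      \<subseteq> {e \<in> map_edges D \<alpha>. \<exists>d\<in>e. d \<in> C \<and> \<alpha> d \<in> A}" for A C
  proof
    fix e assume "e \<in> {e \<in> map_edges D \<alpha>. \<exists>d\<in>e. d \<in> A \<and> \<alpha> d \<in> C}"
    then obtain d where "e \<in> map_edges D \<alpha>" "d \<in> e" "d \<in> A" "\<alpha> d \<in> C" by blast
    moreover from this(1,2) have "\<alpha> d \<in> e" "\<alpha> (\<alpha> d) = d"
      using assms unfolding map_edges_def by auto
    ultimately show "e \<in> {e \<in> map_edges D \<alpha>. \<exists>d\<in>e. d \<in> C \<and> \<alpha> d \<in> A}" by auto
  qed
  show ?thesis unfolding m_between_def using flip[of K L] flip[of L K] by (simp add: subset_antisym)
qed

lemma closed_dart_set_contains_all:
  assumes pm: "plane_map D \<alpha> \<sigma>" and "x0 \<in> D" "x0 \<in> X" "y \<in> D"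
    and \<alpha>_closed: "\<And>d. d \<in> X \<Longrightarrow> \<alpha> d \<in> X"
    and \<sigma>_closed: "\<And>d. d \<in> X \<Longrightarrow> \<sigma> d \<in> X"
  shows "y \<in> X"
proof -
  have vertex_in_X: "u \<in> X" if "z \<in> X" "orb \<sigma> z = orb \<sigma> u" for z u
    using orb_subset[of X \<sigma> z] orb_self[of u \<sigma>] \<sigma>_closed that by auto
  have "orb \<sigma> x0 \<in> map_vertices D \<sigma>" "orb \<sigma> y \<in> map_vertices D \<sigma>"
    using assms unfolding map_vertices_def by auto
  then have "(orb \<sigma> x0, orb \<sigma> y) \<in> (adj_excl D \<alpha> \<sigma> {})\<^sup>*"
    using pm unfolding plane_map_def by blast
  then have "\<exists>z\<in>X. orb \<sigma> z = orb \<sigma> y"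
  proof (induction rule: rtrancl_induct)
    case base
    then show ?case using \<open>x0 \<in> X\<close> by blast
  next
    case (step v w)
    then obtain z u where "z \<in> X" "orb \<sigma> z = v" "v = orb \<sigma> u" "w = orb \<sigma> (\<alpha> u)"
      unfolding adj_excl_def by auto
    then show ?case using vertex_in_X \<alpha>_closed by blast
  qed
  then show ?thesis using vertex_in_X by blast
qed

lemma exists_edge_leaving_face_set:
  assumes pm: "plane_map D \<alpha> \<sigma>" and S: "S \<subseteq> map_faces D \<alpha> \<sigma>" "S \<noteq> {}"
    and F0: "F0 \<in> map_faces D \<alpha> \<sigma>" "F0 \<notin> S"
  shows "\<exists>K\<in>S. \<exists>L\<in>map_faces D \<alpha> \<sigma> - S. \<exists>d\<in>D. d \<in> K \<and> \<alpha> d \<in> L"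
proof (rule ccontr)
  assume no_exit: "\<not> ?thesis"
  have inv: "\<alpha> d \<in> D \<and> \<alpha> (\<alpha> d) = d" if "d \<in> D" for d
    using pm that unfolding plane_map_def by auto
  have \<sigma>D: "\<sigma> d \<in> D" if "d \<in> D" for d
    using pm that unfolding plane_map_def bij_betw_def by auto
  define X where "X = {d \<in> D. \<exists>K\<in>S. d \<in> K}"
  have \<alpha>X: "\<alpha> d \<in> X" if dX: "d \<in> X" for d
  proof -
    obtain K where K: "K \<in> S" "d \<in> K" "d \<in> D" using dX unfolding X_def by auto
    have "orb (\<sigma> \<circ> \<alpha>) (\<alpha> d) \<in> map_faces D \<alpha> \<sigma>"
      using inv K unfolding map_faces_def by auto
    then have "orb (\<sigma> \<circ> \<alpha>) (\<alpha> d) \<in> S"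
      using no_exit K orb_self[of "\<alpha> d"] by blast
    then show ?thesis using X_def inv K orb_self[of "\<alpha> d"] by auto
  qed
  have \<sigma>X: "\<sigma> d \<in> X" if dX: "d \<in> X" for d
  proof -
    obtain K where K: "K \<in> S" "\<alpha> d \<in> K" using \<alpha>X[OF dX] unfolding X_def by auto
    then obtain k where "K = orb (\<sigma> \<circ> \<alpha>) k" using S unfolding map_faces_def by auto
    then have "(\<sigma> \<circ> \<alpha>) (\<alpha> d) \<in> K" using orb_closed K by metis
    then show ?thesis using K inv \<sigma>D dX unfolding X_def by auto
  qed
  obtain k0 where k0: "k0 \<in> D" "orb (\<sigma> \<circ> \<alpha>) k0 \<in> S" using S unfolding map_faces_def by auto
  then have "k0 \<in> X" using orb_self[of k0] unfolding X_def by blast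
  obtain d0 where d0: "d0 \<in> D" "F0 = orb (\<sigma> \<circ> \<alpha>) d0" using F0 unfolding map_faces_def by auto
  have "\<alpha> d0 \<in> D" using inv d0(1) by blast
  then have "\<alpha> d0 \<in> X" by (rule closed_dart_set_contains_all[OF pm k0(1) \<open>k0 \<in> X\<close> _ \<alpha>X \<sigma>X])
  then obtain K where "K \<in> S" "\<alpha> d0 \<in> K" unfolding X_def by auto
  moreover have "\<alpha> (\<alpha> d0) \<in> F0" using inv d0 orb_self by metis
  ultimately show False using no_exit F0 \<open>\<alpha> d0 \<in> D\<close> by blast
qed

text \<open>A discrete divergence argument: if the net flux out of every node of \<open>S\<close> vanishes and all
flux leaving \<open>S\<close> is nonnegative, then it is zero, since the flux inside \<open>S\<close> sums to zero.\<close>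

lemma balanced_outflow_vanishes:
  fixes g :: "'k \<Rightarrow> 'k \<Rightarrow> real" and h :: "'k \<Rightarrow> real"
  assumes "finite B" "S \<subseteq> B"
    and antisym: "\<And>K L. K \<in> S \<Longrightarrow> L \<in> S \<Longrightarrow> g L K = - g K L"
    and h_nonneg: "\<And>K. K \<in> S \<Longrightarrow> 0 \<le> h K"
    and g_nonneg: "\<And>K L. K \<in> S \<Longrightarrow> L \<in> B - S \<Longrightarrow> 0 \<le> g K L"
    and balance: "\<And>K. K \<in> S \<Longrightarrow> h K + (\<Sum>L\<in>B. g K L) = 0"
    and "K \<in> S"
  shows "h K = 0 \<and> (\<forall>L\<in>B - S. g K L = 0)"
proof -
  have fin: "finite S" "finite (B - S)"
    using finite_subset[OF assms(2,1)] assms(1) by simp_all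
  have out_nonneg: "0 \<le> (\<Sum>L\<in>B - S. g K L)" if "K \<in> S" for K
    using g_nonneg[OF that] by (rule sum_nonneg)
  have total_nonneg: "0 \<le> h K + (\<Sum>L\<in>B - S. g K L)" if "K \<in> S" for K
    using h_nonneg[OF that] out_nonneg[OF that] by linarith
  have "(\<Sum>K\<in>S. \<Sum>L\<in>S. g K L) = (\<Sum>L\<in>S. \<Sum>K\<in>S. g K L)"
    by (rule sum.swap)
  also have "\<dots> = (\<Sum>L\<in>S. \<Sum>K\<in>S. - g L K)"
    by (intro sum.cong refl antisym)
  also have "\<dots> = - (\<Sum>K\<in>S. \<Sum>L\<in>S. g K L)"
    by (simp add: sum_negf)
  finally have inner: "(\<Sum>K\<in>S. \<Sum>L\<in>S. g K L) = 0" by simp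
  have "(\<Sum>L\<in>B. g K L) = (\<Sum>L\<in>S. g K L) + (\<Sum>L\<in>B - S. g K L)" for K
    using sum.subset_diff[OF assms(2,1), of "g K"] by linarith
  then have "(\<Sum>K\<in>S. h K + (\<Sum>L\<in>B - S. g K L)) = (\<Sum>K\<in>S. h K + (\<Sum>L\<in>B. g K L))"
    using inner by (simp add: sum.distrib)
  also have "\<dots> = 0" using balance by simp
  finally have "(\<Sum>K\<in>S. h K + (\<Sum>L\<in>B - S. g K L)) = 0" .
  then have "h K + (\<Sum>L\<in>B - S. g K L) = 0"
    using sum_nonneg_eq_0_iff[OF fin(1), of "\<lambda>K. h K + (\<Sum>L\<in>B - S. g K L)"] total_nonneg \<open>K \<in> S\<close>
    by blast
  then have "h K = 0" "(\<Sum>L\<in>B - S. g K L) = 0"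
    using h_nonneg[OF \<open>K \<in> S\<close>] out_nonneg[OF \<open>K \<in> S\<close>] by linarith+
  then show ?thesis
    using sum_nonneg_eq_0_iff[OF fin(2), of "g K"] g_nonneg \<open>K \<in> S\<close> by blast
qed

lemma flow_domain_abs_le_1:
  assumes "\<epsilon> \<in> flow_domain D \<alpha> \<sigma> F0" "K \<in> bounded_faces D \<alpha> \<sigma> F0" "m_between D \<alpha> K F0 > 0"
  shows "\<bar>\<epsilon> K\<bar> \<le> 1"
  using assms unfolding flow_domain_def by blast

lemma flow_domain_abs_diff_le_1:
  assumes "\<epsilon> \<in> flow_domain D \<alpha> \<sigma> F0" "K \<in> bounded_faces D \<alpha> \<sigma> F0" "L \<in> bounded_faces D \<alpha> \<sigma> F0"
    and "K \<noteq> L" "m_between D \<alpha> K L > 0"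
  shows "\<bar>\<epsilon> K - \<epsilon> L\<bar> \<le> 1"
  using assms unfolding flow_domain_def by blast

lemma angle_sum_difference_balance:
  assumes "finite (bounded_faces D \<alpha> \<sigma> F0)" "K \<in> bounded_faces D \<alpha> \<sigma> F0"
    and "\<epsilon> \<in> Q_set D \<alpha> \<sigma> F0 q" "\<epsilon>' \<in> Q_set D \<alpha> \<sigma> F0 q"
  shows "real (m_between D \<alpha> K F0) * (arcsin (\<epsilon> K) - arcsin (\<epsilon>' K))
    + (\<Sum>L\<in>bounded_faces D \<alpha> \<sigma> F0.
         real (m_between D \<alpha> K L) * (arcsin (\<epsilon> K - \<epsilon> L) - arcsin (\<epsilon>' K - \<epsilon>' L))) = 0"
proof -
  let ?B = "bounded_faces D \<alpha> \<sigma> F0"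
  have "angle_sum D \<alpha> \<sigma> F0 K \<epsilon> = angle_sum D \<alpha> \<sigma> F0 K \<epsilon>'"
    using assms(2-4) unfolding Q_set_def by auto
  moreover have "(\<Sum>L\<in>?B. real (m_between D \<alpha> K L) * (arcsin (\<epsilon> K - \<epsilon> L) - arcsin (\<epsilon>' K - \<epsilon>' L)))
      = (\<Sum>L\<in>?B - {K}. real (m_between D \<alpha> K L) * arcsin (\<epsilon> K - \<epsilon> L))
      - (\<Sum>L\<in>?B - {K}. real (m_between D \<alpha> K L) * arcsin (\<epsilon>' K - \<epsilon>' L))"
    by (simp add: sum.remove[OF assms(1,2)] right_diff_distrib sum_subtractf)
  ultimately show ?thesis unfolding angle_sum_def by (simp add: algebra_simps)
qed

lemma flow_domain_arcsin_swap:
  assumes "\<epsilon> \<in> flow_domain D \<alpha> \<sigma> F0" "K \<in> bounded_faces D \<alpha> \<sigma> F0" "L \<in> bounded_faces D \<alpha> \<sigma> F0"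
    and "m_between D \<alpha> K L > 0"
  shows "arcsin (\<epsilon> L - \<epsilon> K) = - arcsin (\<epsilon> K - \<epsilon> L)"
proof (cases "K = L")
  case False
  then have "\<bar>\<epsilon> K - \<epsilon> L\<bar> \<le> 1" using flow_domain_abs_diff_le_1 assms by blast
  then show ?thesis using arcsin_minus[of "\<epsilon> K - \<epsilon> L"] by (simp add: abs_le_iff)
qed simp

lemma Q_set_boundary_terms_vanish:
  assumes pm: "plane_map D \<alpha> \<sigma>"
    and sol: "\<epsilon> \<in> Q_set D \<alpha> \<sigma> F0 q" and sol': "\<epsilon>' \<in> Q_set D \<alpha> \<sigma> F0 q"
    and S: "S \<subseteq> bounded_faces D \<alpha> \<sigma> F0"
    and nonneg: "\<And>K. K \<in> S \<Longrightarrow> \<epsilon>' K \<le> \<epsilon> K"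
    and max: "\<And>K L. K \<in> S \<Longrightarrow> L \<in> bounded_faces D \<alpha> \<sigma> F0 \<Longrightarrow> \<epsilon> L - \<epsilon>' L \<le> \<epsilon> K - \<epsilon>' K"
    and "K \<in> S"
  shows "real (m_between D \<alpha> K F0) * (arcsin (\<epsilon> K) - arcsin (\<epsilon>' K)) = 0"
    and "L \<in> bounded_faces D \<alpha> \<sigma> F0 - S \<Longrightarrow>
      real (m_between D \<alpha> K L) * (arcsin (\<epsilon> K - \<epsilon> L) - arcsin (\<epsilon>' K - \<epsilon>' L)) = 0"
proof -
  let ?B = "bounded_faces D \<alpha> \<sigma> F0"
  let ?m = "m_between D \<alpha>"
  define h where "h K = real (?m K F0) * (arcsin (\<epsilon> K) - arcsin (\<epsilon>' K))" for K
  define g where "g K L = real (?m K L) * (arcsin (\<epsilon> K - \<epsilon> L) - arcsin (\<epsilon>' K - \<epsilon>' L))" for K L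
  have finB: "finite ?B" using pm unfolding plane_map_def bounded_faces_def map_faces_def by simp
  have dom: "\<epsilon> \<in> flow_domain D \<alpha> \<sigma> F0" "\<epsilon>' \<in> flow_domain D \<alpha> \<sigma> F0"
    using sol sol' unfolding Q_set_def by auto
  have m_sym: "?m K L = ?m L K" for K L
    using m_between_sym pm unfolding plane_map_def by metis
  have "h K = 0 \<and> (\<forall>L\<in>?B - S. g K L = 0)"
  proof (rule balanced_outflow_vanishes[OF finB S _ _ _ _ \<open>K \<in> S\<close>])
    show "g L K = - g K L" if "K \<in> S" "L \<in> S" for K L
    proof (cases "?m K L > 0")
      case True
      have "K \<in> ?B" "L \<in> ?B" using that S by auto
      then have "arcsin (\<epsilon> L - \<epsilon> K) = - arcsin (\<epsilon> K - \<epsilon> L)"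
          "arcsin (\<epsilon>' L - \<epsilon>' K) = - arcsin (\<epsilon>' K - \<epsilon>' L)"
        using flow_domain_arcsin_swap dom True by blast+
      then show ?thesis using m_sym[of K L] unfolding g_def by (simp add: algebra_simps)
    qed (use m_sym[of K L] in \<open>simp add: g_def\<close>)
    show "0 \<le> h K" if "K \<in> S" for K
    proof (cases "?m K F0 > 0")
      case True
      have "K \<in> ?B" using that S by auto
      then have "\<bar>\<epsilon> K\<bar> \<le> 1" "\<bar>\<epsilon>' K\<bar> \<le> 1" using flow_domain_abs_le_1 dom True by blast+
      then show ?thesis using nonneg[OF that] arcsin_le_mono unfolding h_def by simp
    qed (simp add: h_def)
    show "0 \<le> g K L" if "K \<in> S" "L \<in> ?B - S" for K L
    proof (cases "?m K L > 0")
      case True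
      have "K \<in> ?B" "L \<in> ?B" "K \<noteq> L" using that S by auto
      then have "\<bar>\<epsilon> K - \<epsilon> L\<bar> \<le> 1" "\<bar>\<epsilon>' K - \<epsilon>' L\<bar> \<le> 1"
        using flow_domain_abs_diff_le_1 dom True by blast+
      moreover have "\<epsilon>' K - \<epsilon>' L \<le> \<epsilon> K - \<epsilon> L" using max[OF that(1), of L] that(2) by simp
      ultimately show ?thesis using arcsin_le_mono unfolding g_def by simp
    qed (simp add: g_def)
    show "h K + (\<Sum>L\<in>?B. g K L) = 0" if "K \<in> S" for K
      unfolding h_def g_def
      by (rule angle_sum_difference_balance[OF finB _ sol sol']) (use that S in auto)
  qed
  then show "real (?m K F0) * (arcsin (\<epsilon> K) - arcsin (\<epsilon>' K)) = 0"
    and "L \<in> ?B - S \<Longrightarrow> real (?m K L) * (arcsin (\<epsilon> K - \<epsilon> L) - arcsin (\<epsilon>' K - \<epsilon>' L)) = 0"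
    unfolding h_def g_def by auto
qed

lemma Q_set_le:
  assumes pm: "plane_map D \<alpha> \<sigma>" and F0: "F0 \<in> map_faces D \<alpha> \<sigma>"
    and sol: "\<epsilon> \<in> Q_set D \<alpha> \<sigma> F0 q" and sol': "\<epsilon>' \<in> Q_set D \<alpha> \<sigma> F0 q"
    and K0: "K0 \<in> bounded_faces D \<alpha> \<sigma> F0"
  shows "\<epsilon> K0 \<le> \<epsilon>' K0"
proof (rule ccontr)
  assume "\<not> \<epsilon> K0 \<le> \<epsilon>' K0"
  let ?B = "bounded_faces D \<alpha> \<sigma> F0"
  have finD: "finite D" using pm unfolding plane_map_def by simp
  have finB: "finite ?B" using finD unfolding bounded_faces_def map_faces_def by simp
  have dom: "\<epsilon> \<in> flow_domain D \<alpha> \<sigma> F0" "\<epsilon>' \<in> flow_domain D \<alpha> \<sigma> F0"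
    using sol sol' unfolding Q_set_def by auto
  define M where "M = Max ((\<lambda>K. \<epsilon> K - \<epsilon>' K) ` ?B)"
  define S where "S = {K \<in> ?B. \<epsilon> K - \<epsilon>' K = M}"
  have M_ge: "\<epsilon> K - \<epsilon>' K \<le> M" if "K \<in> ?B" for K
    using finB that unfolding M_def by simp
  have "M \<in> (\<lambda>K. \<epsilon> K - \<epsilon>' K) ` ?B" using finB K0 unfolding M_def by (intro Max_in) auto
  then have "S \<noteq> {}" unfolding S_def by auto
  have "M > 0" using M_ge[OF K0] \<open>\<not> \<epsilon> K0 \<le> \<epsilon>' K0\<close> by simp
  have "S \<subseteq> ?B" unfolding S_def by auto
  have S_nonneg: "\<epsilon>' K \<le> \<epsilon> K" if "K \<in> S" for K
    using that \<open>M > 0\<close> unfolding S_def by auto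
  have S_max: "\<epsilon> L - \<epsilon>' L \<le> \<epsilon> K - \<epsilon>' K" if "K \<in> S" "L \<in> ?B" for K L
    using that M_ge unfolding S_def by auto
  have "S \<subseteq> map_faces D \<alpha> \<sigma>" "F0 \<notin> S" using \<open>S \<subseteq> ?B\<close> unfolding bounded_faces_def by auto
  then obtain K L d where KL: "K \<in> S" "L \<in> map_faces D \<alpha> \<sigma> - S" "d \<in> D" "d \<in> K" "\<alpha> d \<in> L"
    using exists_edge_leaving_face_set[OF pm _ \<open>S \<noteq> {}\<close> F0] by blast
  have K: "K \<in> ?B" "\<epsilon> K - \<epsilon>' K = M" using KL(1) unfolding S_def by auto
  have m_pos: "m_between D \<alpha> K L > 0" using finD KL(3-5) by (rule m_between_pos)
  show False
  proof (cases "L = F0")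
    case True
    then have "\<bar>\<epsilon> K\<bar> \<le> 1" "\<bar>\<epsilon>' K\<bar> \<le> 1" using flow_domain_abs_le_1 dom K m_pos by blast+
    then have "arcsin (\<epsilon>' K) < arcsin (\<epsilon> K)" using K \<open>M > 0\<close> arcsin_less_mono by simp
    moreover have "real (m_between D \<alpha> K F0) * (arcsin (\<epsilon> K) - arcsin (\<epsilon>' K)) = 0"
      using Q_set_boundary_terms_vanish(1)[OF pm sol sol' \<open>S \<subseteq> ?B\<close>] S_nonneg S_max KL(1) by blast
    ultimately show False using m_pos True by simp
  next
    case False
    then have L: "L \<in> ?B - S" "K \<noteq> L" using KL(1,2) unfolding bounded_faces_def by auto
    then have "\<bar>\<epsilon> K - \<epsilon> L\<bar> \<le> 1" "\<bar>\<epsilon>' K - \<epsilon>' L\<bar> \<le> 1"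
      using flow_domain_abs_diff_le_1 dom K m_pos by blast+
    moreover have "\<epsilon>' K - \<epsilon>' L < \<epsilon> K - \<epsilon> L" using L M_ge K unfolding S_def by force
    ultimately have "arcsin (\<epsilon>' K - \<epsilon>' L) < arcsin (\<epsilon> K - \<epsilon> L)" using arcsin_less_mono by simp
    moreover have "real (m_between D \<alpha> K L) * (arcsin (\<epsilon> K - \<epsilon> L) - arcsin (\<epsilon>' K - \<epsilon>' L)) = 0"
      using Q_set_boundary_terms_vanish(2)[OF pm sol sol' \<open>S \<subseteq> ?B\<close>] S_nonneg S_max KL(1) L(1) by blast
    ultimately show False using m_pos by simp
  qed
qed

theorem theorem1:
  fixes D :: "'d set" and \<alpha> \<sigma> :: "'d \<Rightarrow> 'd" and F0 :: "'d set" and q :: "'d set \<Rightarrow> int"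
  assumes "plane_map D \<alpha> \<sigma>"
    and "every_edge_on_cycle D \<alpha> \<sigma>"
    and "F0 \<in> map_faces D \<alpha> \<sigma>"
  shows "Q_set D \<alpha> \<sigma> F0 q = {} \<or> (\<exists>\<epsilon>. Q_set D \<alpha> \<sigma> F0 q = {\<epsilon>})"
proof -
  have "\<epsilon> = \<epsilon>'" if sol: "\<epsilon> \<in> Q_set D \<alpha> \<sigma> F0 q" "\<epsilon>' \<in> Q_set D \<alpha> \<sigma> F0 q" for \<epsilon> \<epsilon>'
  proof (rule extensionalityI)
    show "\<epsilon> \<in> extensional (bounded_faces D \<alpha> \<sigma> F0)" "\<epsilon>' \<in> extensional (bounded_faces D \<alpha> \<sigma> F0)"
      using sol unfolding Q_set_def flow_domain_def by auto
    show "\<epsilon> K = \<epsilon>' K" if "K \<in> bounded_faces D \<alpha> \<sigma> F0" for K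
      using Q_set_le[OF assms(1,3)] sol that by (meson order_antisym)
  qed
  then show ?thesis by blast
qed

end
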